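(* In the setting of the context, consider any sample path. Then for any integer $t_0\ge 0$ and any vector $\tilde Q_{t_0}$, the sequence $\{\hat Q_t\}$ is bounded below if and only if the sequence $\{\tilde Q_t\}$ defined from $t_0$ and $\tilde Q_{t_0}$ is bounded below.
   Context: Finite-space game: $S=\{1,\dots,n\}$, $S_o=S\cup\{0\}$, $0$ an absorbing termination state; at $i\in S$ players I and II have finite control sets $U(i),V(i)$; under $(u,v)$ transition to $j\in S_o$ w.p. $p_{ij}(u,v)$ with real transition cost $\hat g(i,u,v,j)$. $R=\{(i,u,v):i\in S,u\in U(i),v\in V(i)\}$; $U(0)=V(0)=\{0\}$, and all Q-factor vectors are indexed by $R\cup\{(0,0,0)\}$ with value $0$ at $(0,0,0)$. Fix a stationary randomized policy $\bar\nu$ of player II and write $\bar\nu_s=\bar\nu(\cdot\mid s)\in\mathcal P(V(s))$ (point mass at $0$ for $s=0$). For a vector $Q$, state $s$, $\tilde u\in U(s)$: $\underline Q(s,\tilde u,\bar\nu_s)=\sum_{\tilde v\in V(s)}\bar\nu_s(\tilde v)Q(s,\tilde u,\tilde v)$. Random variables (fixed along a sample path): stepsizes $\gamma_{t,\ell}\in[0,1]$, delays $0\le\tau_{\ell\tilde\ell}(t)\le t$, successors $j_t^\ell\in S_o$ for $\ell,\tilde\ell\in R$, $t\ge0$, and $\hat Q_0$. For any vector sequence $\{X_t\}$ write $X^{(\ell)}_t(\tilde\ell)=X_{\tau_{\ell\tilde\ell}(t)}(\tilde\ell)$. The sequence $\{\hat Q_t\}$ satisfies, for $\ell=(i,u,v)\in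 R$ and $s=j_t^\ell$: $\hat Q_{t+1}(i,u,v)=(1-\gamma_{t,\ell})\hat Q_t(i,u,v)+\gamma_{t,\ell}(\hat g(i,u,v,s)+\underline{\hat Q}^{(\ell)}_t(s,u_t^\ell,\bar\nu_s))$, where $u_t^\ell\in\arg\min_{\tilde u\in U(s)}\underline{\hat Q}^{(\ell)}_t(s,\tilde u,\bar\nu_s)$. Given an integer $t_0$ and a vector $\tilde Q_{t_0}$, the sequence $\{\tilde Q_t\}$ is defined by $\tilde Q_t=\tilde Q_{t_0}$ for $t\le t_0$ and, for $t\ge t_0$, $\tilde Q_{t+1}(i,u,v)=(1-\gamma_{t,\ell})\tilde Q_t(i,u,v)+\gamma_{t,\ell}(\hat g(i,u,v,s)+\underline{\tilde Q}^{(\ell)}_t(s,u_t^\ell,\bar\nu_s))$, using the same $\gamma_{t,\ell}$, $j_t^\ell$, $u_t^\ell$, $\tau_{\ell\tilde\ell}(t)$. *)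

theory Defs
  imports Complex_Main
begin

text \<open>Indices of Q-factors are triples (i,u,v) of naturals; states are 1..n, 0 is the
termination state; controls are encoded as naturals, with U 0 = V 0 = {0}.\<close>

type_synonym idx = "nat \<times> nat \<times> nat"

definition Rset :: "nat \<Rightarrow> (nat \<Rightarrow> nat set) \<Rightarrow> (nat \<Rightarrow> nat set) \<Rightarrow> idx set" where
  "Rset n U V = {(i,u,v). i \<in> {1..n} \<and> u \<in> U i \<and> v \<in> V i}"

definition qbar :: "(nat \<Rightarrow> nat set) \<Rightarrow> (nat \<Rightarrow> nat \<Rightarrow> real) \<Rightarrow> (idx \<Rightarrow> real) \<Rightarrow> nat \<Rightarrow> nat \<Rightarrow> real" where
  "qbar V nu Q s u = (\<Sum>v\<in>V s. nu s v * Q (s,u,v))"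

definition delayed :: "(idx \<Rightarrow> idx \<Rightarrow> nat \<Rightarrow> nat) \<Rightarrow> (nat \<Rightarrow> idx \<Rightarrow> real) \<Rightarrow> idx \<Rightarrow> nat \<Rightarrow> idx \<Rightarrow> real" where
  "delayed tau X l t = (\<lambda>l'. X (tau l l' t) l')"

definition bdd_below_seq :: "idx set \<Rightarrow> (nat \<Rightarrow> idx \<Rightarrow> real) \<Rightarrow> bool" where
  "bdd_below_seq R X \<longleftrightarrow> (\<exists>c. \<forall>t. \<forall>l \<in> R \<union> {(0,0,0)}. c \<le> X t l)"

end

theory Submission
  imports Defs
begin

text \<open>Both iterations use the same stepsizes, successors, controls and delays, so the cost
terms cancel in the difference \<open>Qhat - Qtil\<close>. The difference therefore evolves by convex
combinations of its own (delayed) earlier values, and a bound valid on the finitely many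
indices and times up to \<open>t0\<close> propagates to all times. Sequences that stay uniformly close
are bounded below together.\<close>

lemma Rset_finite:
  assumes "\<And>i. i \<in> {1..n} \<Longrightarrow> finite (U i)" and "\<And>i. i \<in> {1..n} \<Longrightarrow> finite (V i)"
  shows "finite (Rset n U V)"
proof -
  have "Rset n U V = Sigma {1..n} (\<lambda>i. U i \<times> V i)" unfolding Rset_def by auto
  then show ?thesis using assms by (auto intro!: finite_SigmaI)
qed

lemma qbar_delayed_diff:
  "qbar V nu (delayed tau X l t) s u - qbar V nu (delayed tau Y l t) s u
     = qbar V nu (delayed tau (\<lambda>t l. X t l - Y t l) l t) s u"
  unfolding qbar_def delayed_def by (simp add: sum_subtractf[symmetric] algebra_simps)

lemma delayed_iteration_diff:
  assumes "X (Suc t) l = (1 - g) * X t l + g * (c + qbar V nu (delayed tau X l t) s w)"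
    and "Y (Suc t) l = (1 - g) * Y t l + g * (c + qbar V nu (delayed tau Y l t) s w)"
  shows "X (Suc t) l - Y (Suc t) l
    = (1 - g) * (X t l - Y t l) + g * qbar V nu (delayed tau (\<lambda>t l. X t l - Y t l) l t) s w"
  unfolding assms qbar_delayed_diff[symmetric] by (simp add: right_diff_distrib distrib_left)

lemma abs_qbar_le:
  assumes "\<forall>v\<in>V s. 0 \<le> nu s v" and "(\<Sum>v\<in>V s. nu s v) = 1"
    and "\<And>v. v \<in> V s \<Longrightarrow> \<bar>X (s,u,v)\<bar> \<le> B"
  shows "\<bar>qbar V nu X s u\<bar> \<le> B"
proof -
  have "\<bar>qbar V nu X s u\<bar> \<le> (\<Sum>v\<in>V s. \<bar>nu s v * X (s,u,v)\<bar>)"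
    unfolding qbar_def by (rule sum_abs)
  also have "\<dots> \<le> (\<Sum>v\<in>V s. nu s v * B)"
    using assms by (intro sum_mono) (simp add: abs_mult mult_left_mono)
  also have "\<dots> = B" using assms(2) by (simp add: sum_distrib_right[symmetric])
  finally show ?thesis .
qed

lemma abs_convex_comb_le:
  fixes a b g B :: real
  assumes "0 \<le> g" "g \<le> 1" "\<bar>a\<bar> \<le> B" "\<bar>b\<bar> \<le> B"
  shows "\<bar>(1 - g) * a + g * b\<bar> \<le> B"
proof -
  have "\<bar>(1 - g) * a + g * b\<bar> \<le> (1 - g) * \<bar>a\<bar> + g * \<bar>b\<bar>"
    using assms(1,2) by (metis abs_mult abs_of_nonneg abs_triangle_ineq diff_ge_0_iff_ge)
  also have "\<dots> \<le> (1 - g) * B + g * B"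
    using assms by (intro add_mono mult_left_mono) auto
  finally show ?thesis by (simp add: algebra_simps)
qed

lemma bdd_below_seq_close:
  assumes "bdd_below_seq R X" and close: "\<And>t l. l \<in> R \<union> {(0,0,0)} \<Longrightarrow> \<bar>X t l - Y t l\<bar> \<le> B"
  shows "bdd_below_seq R Y"
proof -
  obtain c where c: "\<And>t l. l \<in> R \<union> {(0,0,0)} \<Longrightarrow> c \<le> X t l"
    using assms(1) unfolding bdd_below_seq_def by blast
  have "c - B \<le> Y t l" if "l \<in> R \<union> {(0,0,0)}" for t l
    using c[OF that, of t] close[OF that, of t] by linarith
  then show ?thesis unfolding bdd_below_seq_def by blast
qed

lemma delayed_iterations_uniformly_close:
  fixes X Y :: "nat \<Rightarrow> idx \<Rightarrow> real" and R :: "idx set"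
  assumes finR: "finite R"
    and succ: "\<And>t l v. l \<in> R \<Longrightarrow> v \<in> V (j t l) \<Longrightarrow> (j t l, uu t l, v) \<in> R \<union> {(0,0,0)}"
    and nu_prob: "\<And>t l. l \<in> R \<Longrightarrow>
        (\<forall>v\<in>V (j t l). 0 \<le> nu (j t l) v) \<and> (\<Sum>v\<in>V (j t l). nu (j t l) v) = 1"
    and gam_rng: "\<And>t l. l \<in> R \<Longrightarrow> 0 \<le> gam t l \<and> gam t l \<le> 1"
    and tau_le: "\<And>t l l'. l \<in> R \<Longrightarrow> l' \<in> R \<Longrightarrow> tau l l' t \<le> t"
    and X_term: "\<And>t. X t (0,0,0) = 0" and Y_term: "\<And>t. Y t (0,0,0) = 0"
    and X_iter: "\<And>t i u v. t0 \<le> t \<Longrightarrow> (i,u,v) \<in> R \<Longrightarrow>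
        X (Suc t) (i,u,v) = (1 - gam t (i,u,v)) * X t (i,u,v)
          + gam t (i,u,v) * (ghat i u v (j t (i,u,v))
              + qbar V nu (delayed tau X (i,u,v) t) (j t (i,u,v)) (uu t (i,u,v)))"
    and Y_iter: "\<And>t i u v. t0 \<le> t \<Longrightarrow> (i,u,v) \<in> R \<Longrightarrow>
        Y (Suc t) (i,u,v) = (1 - gam t (i,u,v)) * Y t (i,u,v)
          + gam t (i,u,v) * (ghat i u v (j t (i,u,v))
              + qbar V nu (delayed tau Y (i,u,v) t) (j t (i,u,v)) (uu t (i,u,v)))"
  shows "\<exists>B. \<forall>t. \<forall>l\<in>R \<union> {(0,0,0)}. \<bar>X t l - Y t l\<bar> \<le> B"
proof -
  define D where "D = (\<lambda>t l. X t l - Y t l)"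
  define B where "B = Max (insert 0 ((\<lambda>(t,l). \<bar>D t l\<bar>) ` ({..t0} \<times> R)))"
  have finB: "finite (insert 0 ((\<lambda>(t,l). \<bar>D t l\<bar>) ` ({..t0} \<times> R)))" using finR by simp
  have B_nonneg: "0 \<le> B" unfolding B_def using finB by (intro Max_ge) auto
  have D_term: "D t (0,0,0) = 0" for t unfolding D_def using X_term Y_term by simp
  have "\<forall>l\<in>R. \<bar>D t l\<bar> \<le> B" for t
  proof (induction t rule: less_induct)
    case (less t)
    show ?case
    proof
      fix l assume l: "l \<in> R"
      show "\<bar>D t l\<bar> \<le> B"
      proof (cases "t \<le> t0")
        case True
        then show ?thesis unfolding B_def using finB l
          by (intro Max_ge) (auto intro!: image_eqI[where x="(t,l)"])
      next
        case False
        then obtain t' where t': "t = Suc t'" "t0 \<le> t'" by (cases t) auto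
        obtain i u v where l_eq: "l = (i,u,v)" by (cases l)
        have delayed_le: "\<bar>D (tau l (j t' l, uu t' l, v') t') (j t' l, uu t' l, v')\<bar> \<le> B"
          if "v' \<in> V (j t' l)" for v'
        proof (cases "(j t' l, uu t' l, v') \<in> R")
          case True
          then have "tau l (j t' l, uu t' l, v') t' < t" using tau_le[OF l True, of t'] t'(1) by simp
          with less True show ?thesis by blast
        next
          case False
          then show ?thesis using succ[OF l that] D_term B_nonneg by simp
        qed
        have D_step: "D t l = (1 - gam t' l) * D t' l
            + gam t' l * qbar V nu (delayed tau D l t') (j t' l) (uu t' l)"
          using delayed_iteration_diff[OF X_iter[OF t'(2)] Y_iter[OF t'(2)]] l
          unfolding D_def t'(1) l_eq by simp
        have "\<bar>qbar V nu (delayed tau D l t') (j t' l) (uu t' l)\<bar> \<le> B"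
          using nu_prob[OF l] delayed_le by (intro abs_qbar_le) (auto simp: delayed_def)
        moreover have "\<bar>D t' l\<bar> \<le> B" using less t' l by blast
        ultimately show ?thesis
          unfolding D_step using abs_convex_comb_le gam_rng[OF l] by blast
      qed
    qed
  qed
  then show ?thesis using D_term B_nonneg unfolding D_def by auto
qed

theorem lemma4p3:
  fixes n :: nat
    and U V :: "nat \<Rightarrow> nat set"
    and nu :: "nat \<Rightarrow> nat \<Rightarrow> real"
    and ghat :: "nat \<Rightarrow> nat \<Rightarrow> nat \<Rightarrow> nat \<Rightarrow> real"
    and gam :: "nat \<Rightarrow> idx \<Rightarrow> real"
    and tau :: "idx \<Rightarrow> idx \<Rightarrow> nat \<Rightarrow> nat"
    and j :: "nat \<Rightarrow> idx \<Rightarrow> nat"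
    and uu :: "nat \<Rightarrow> idx \<Rightarrow> nat"
    and Qhat Qtil :: "nat \<Rightarrow> idx \<Rightarrow> real"
    and t0 :: nat
  assumes U_fin: "\<And>i. i \<in> {1..n} \<Longrightarrow> finite (U i) \<and> U i \<noteq> {}"
    and V_fin: "\<And>i. i \<in> {1..n} \<Longrightarrow> finite (V i) \<and> V i \<noteq> {}"
    and U0: "U 0 = {0}" and V0: "V 0 = {0}"
    and nu_prob: "\<And>s. s \<in> {0..n} \<Longrightarrow> (\<forall>v\<in>V s. 0 \<le> nu s v) \<and> (\<Sum>v\<in>V s. nu s v) = 1"
    and gam_rng: "\<And>t l. l \<in> Rset n U V \<Longrightarrow> 0 \<le> gam t l \<and> gam t l \<le> 1"
    and tau_le: "\<And>t l l'. l \<in> Rset n U V \<Longrightarrow> l' \<in> Rset n U V \<Longrightarrow> tau l l' t \<le> t"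
    and j_rng: "\<And>t l. l \<in> Rset n U V \<Longrightarrow> j t l \<in> {0..n}"
    and uu_argmin: "\<And>t l. l \<in> Rset n U V \<Longrightarrow>
        uu t l \<in> U (j t l) \<and>
        (\<forall>u'\<in>U (j t l). qbar V nu (delayed tau Qhat l t) (j t l) (uu t l)
                          \<le> qbar V nu (delayed tau Qhat l t) (j t l) u')"
    and Qhat_term: "\<And>t. Qhat t (0,0,0) = 0"
    and Qhat_iter: "\<And>t i u v. (i,u,v) \<in> Rset n U V \<Longrightarrow>
        Qhat (Suc t) (i,u,v) = (1 - gam t (i,u,v)) * Qhat t (i,u,v)
          + gam t (i,u,v) * (ghat i u v (j t (i,u,v))
              + qbar V nu (delayed tau Qhat (i,u,v) t) (j t (i,u,v)) (uu t (i,u,v)))"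
    and Qtil_term: "\<And>t. Qtil t (0,0,0) = 0"
    and Qtil_init: "\<And>t. t \<le> t0 \<Longrightarrow> Qtil t = Qtil t0"
    and Qtil_iter: "\<And>t i u v. t0 \<le> t \<Longrightarrow> (i,u,v) \<in> Rset n U V \<Longrightarrow>
        Qtil (Suc t) (i,u,v) = (1 - gam t (i,u,v)) * Qtil t (i,u,v)
          + gam t (i,u,v) * (ghat i u v (j t (i,u,v))
              + qbar V nu (delayed tau Qtil (i,u,v) t) (j t (i,u,v)) (uu t (i,u,v)))"
  shows "bdd_below_seq (Rset n U V) Qhat \<longleftrightarrow> bdd_below_seq (Rset n U V) Qtil"
proof -
  have succ: "(j t l, uu t l, v) \<in> Rset n U V \<union> {(0,0,0)}"
    if "l \<in> Rset n U V" "v \<in> V (j t l)" for t l v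
  proof -
    have "j t l \<in> {0..n}" "uu t l \<in> U (j t l)"
      using j_rng[OF that(1)] conjunct1[OF uu_argmin[OF that(1)]] by simp_all
    then show ?thesis using that(2) U0 V0 by (cases "j t l = 0") (auto simp: Rset_def)
  qed
  have "\<exists>B. \<forall>t. \<forall>l\<in>Rset n U V \<union> {(0,0,0)}. \<bar>Qhat t l - Qtil t l\<bar> \<le> B"
  proof (rule delayed_iterations_uniformly_close[where R = "Rset n U V" and V = V and j = j
        and uu = uu and nu = nu and gam = gam and tau = tau and ghat = ghat and ?t0.0 = t0])
    show "finite (Rset n U V)" using U_fin V_fin by (intro Rset_finite) auto
    show "(\<forall>v\<in>V (j t l). 0 \<le> nu (j t l) v) \<and> (\<Sum>v\<in>V (j t l). nu (j t l) v) = 1"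
      if "l \<in> Rset n U V" for t l using nu_prob[OF j_rng[OF that]] .
  qed (rule succ gam_rng tau_le Qhat_term Qtil_term Qhat_iter Qtil_iter; assumption)+
  then obtain B where close: "\<And>t l. l \<in> Rset n U V \<union> {(0,0,0)} \<Longrightarrow> \<bar>Qhat t l - Qtil t l\<bar> \<le> B"
    by blast
  then have "\<And>t l. l \<in> Rset n U V \<union> {(0,0,0)} \<Longrightarrow> \<bar>Qtil t l - Qhat t l\<bar> \<le> B"
    by (simp add: abs_minus_commute)
  with close show ?thesis using bdd_below_seq_close by metis
qed

end
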